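(* Let $P$ be a program over a propositional signature $\Sigma$. Then $NF(P)$ is in normal form, and $NF(P)$ is strongly equivalent to $P$.
   Context: A program over $\Sigma$ is a finite set of rules $r$ of the form $a_1\vee\dots\vee a_k\leftarrow b_1,\dots,b_l,\ not\,c_1,\dots,not\,c_m,\ not\,not\,d_1,\dots,not\,not\,d_n$ with all atoms in $\Sigma$ and $k,l,m,n\ge 0$. Write $H(r)=\{a_1,\dots,a_k\}$, $B^+(r)=\{b_1,\dots,b_l\}$, $B^-(r)=\{c_1,\dots,c_m\}$, $B^{--}(r)=\{d_1,\dots,d_n\}$, and $B(r)=B^+(r)\cup\{not\,c: c\in B^-(r)\}\cup\{not\,not\,d: d\in B^{--}(r)\}$ (the body; its elements are called literals). For $I\subseteq\Sigma$, the reduct is $P^I=\{H(r)\leftarrow B^+(r): r\in P,\ B^-(r)\cap I=\emptyset,\ B^{--}(r)\subseteq I\}$. A set $I$ classically satisfies $r$ if $B^+(r)\subseteq I$, $B^-(r)\cap I=\emptyset$ and $B^{--}(r)\subseteq I$ together imply $H(r)\cap I\neq\emptyset$. An HT-interpretation $\langle X,Y\rangle$ with $X\subseteq Y$ is an HT-model of $P$ if $Y$ classically satisfies every rule of $P$ and $X$ classically satisfies every rule of $P^Y$. $Y$ is an answer set of $P$ if $\langle Y,Y\rangle$ is an HT-model of $P$ and no $\langle X,Y\rangle$ with $X\subsetneq Y$ is. $AS(P)$ denotes the set of answer sets. Programs $P_1,P_2$ are strongly equivalent if $AS(P_1\cup R)=AS(P_2\cup R)$ for every program $R$. A rule $r$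 is tautological if $H(r)\cap B^+(r)\ne\emptyset$, or $B^+(r)\cap B^-(r)\ne\emptyset$, or $B^-(r)\cap B^{--}(r)\ne\emptyset$. A rule $r\in P$ is minimal in $P$ if there is no $r'\in P$ with ($H(r')\subseteq H(r)$ and $B(r')\subsetneq B(r)$) or ($H(r')\subsetneq H(r)$ and $B(r')\subseteq B(r)$). $P$ is in normal form if: (i) for every atom $a$ and every $r\in P$, at most one of $a$, $not\,a$, $not\,not\,a$ is in $B(r)$; (ii) if $a\in H(r)$ then neither $a$ nor $not\,a$ is in $B(r)$; (iii) every rule of $P$ is minimal in $P$. The program $NF(P)$ is obtained from $P$ by: 1. removing all tautological rules; 2. in each remaining rule $r$, removing from $B^{--}(r)$ every atom that is in $B^+(r)$; 3. in each remaining rule $r$, removing from $H(r)$ every atom that is in $B^-(r)$; 4. removing from the resulting program all rules that are not minimal in it. *)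

theory Defs
  imports Main
begin

text \<open>Atoms range over the type 'a (the signature). A rule is
  H <- B+, not B-, not not B--, each component a finite set of atoms.\<close>

record 'a rule =
  hd :: "'a set"
  bpos :: "'a set"
  bneg :: "'a set"
  bnn :: "'a set"

datatype 'a lit = Pos 'a | Neg 'a | NNeg 'a

definition body :: "'a rule \<Rightarrow> 'a lit set" where
  "body r = Pos ` bpos r \<union> Neg ` bneg r \<union> NNeg ` bnn r"

definition is_rule :: "'a rule \<Rightarrow> bool" where
  "is_rule r \<longleftrightarrow> finite (hd r) \<and> finite (bpos r) \<and> finite (bneg r) \<and> finite (bnn r)"

definition is_program :: "'a rule set \<Rightarrow> bool" where
  "is_program P \<longleftrightarrow> finite P \<and> (\<forall>r\<in>P. is_rule r)"

definition reduct :: "'a rule set \<Rightarrow> 'a set \<Rightarrow> 'a rule set" where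
  "reduct P I = {\<lparr>hd = hd r, bpos = bpos r, bneg = {}, bnn = {}\<rparr> | r.
                  r \<in> P \<and> bneg r \<inter> I = {} \<and> bnn r \<subseteq> I}"

definition csat_rule :: "'a set \<Rightarrow> 'a rule \<Rightarrow> bool" where
  "csat_rule I r \<longleftrightarrow>
     (bpos r \<subseteq> I \<and> bneg r \<inter> I = {} \<and> bnn r \<subseteq> I \<longrightarrow> hd r \<inter> I \<noteq> {})"

definition csat :: "'a set \<Rightarrow> 'a rule set \<Rightarrow> bool" where
  "csat I P \<longleftrightarrow> (\<forall>r\<in>P. csat_rule I r)"

definition ht_model :: "'a set \<Rightarrow> 'a set \<Rightarrow> 'a rule set \<Rightarrow> bool" where
  "ht_model X Y P \<longleftrightarrow> X \<subseteq> Y \<and> csat Y P \<and> csat X (reduct P Y)"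

definition answer_set :: "'a set \<Rightarrow> 'a rule set \<Rightarrow> bool" where
  "answer_set Y P \<longleftrightarrow> ht_model Y Y P \<and> \<not> (\<exists>X. X \<subset> Y \<and> ht_model X Y P)"

definition AS :: "'a rule set \<Rightarrow> 'a set set" where
  "AS P = {Y. answer_set Y P}"

definition strongly_equiv :: "'a rule set \<Rightarrow> 'a rule set \<Rightarrow> bool" where
  "strongly_equiv P1 P2 \<longleftrightarrow> (\<forall>R. is_program R \<longrightarrow> AS (P1 \<union> R) = AS (P2 \<union> R))"

definition tautological :: "'a rule \<Rightarrow> bool" where
  "tautological r \<longleftrightarrow> hd r \<inter> bpos r \<noteq> {} \<or> bpos r \<inter> bneg r \<noteq> {} \<or> bneg r \<inter> bnn r \<noteq> {}"

definition minimal_in :: "'a rule \<Rightarrow> 'a rule set \<Rightarrow> bool" where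
  "minimal_in r P \<longleftrightarrow> \<not> (\<exists>r'\<in>P. (hd r' \<subseteq> hd r \<and> body r' \<subset> body r) \<or>
                                   (hd r' \<subset> hd r \<and> body r' \<subseteq> body r))"

definition normal_form :: "'a rule set \<Rightarrow> bool" where
  "normal_form P \<longleftrightarrow>
     (\<forall>r\<in>P. \<forall>a. card ({Pos a, Neg a, NNeg a} \<inter> body r) \<le> 1) \<and>
     (\<forall>r\<in>P. \<forall>a\<in>hd r. Pos a \<notin> body r \<and> Neg a \<notin> body r) \<and>
     (\<forall>r\<in>P. minimal_in r P)"

definition NF :: "'a rule set \<Rightarrow> 'a rule set" where
  "NF P = (let P1 = {r\<in>P. \<not> tautological r};
               P2 = (\<lambda>r. r\<lparr>bnn := bnn r - bpos r\<rparr>) ` P1;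
               P3 = (\<lambda>r. r\<lparr>hd := hd r - bneg r\<rparr>) ` P2
           in {r\<in>P3. minimal_in r P3})"

end

theory Submission
  imports Defs
begin

text \<open>An HT-interpretation is an HT-model of a program iff it HT-satisfies each rule separately,
  so programs with the same HT-models remain indistinguishable after adding any program R, and
  hence are strongly equivalent. Every step of NF preserves HT-models: tautological rules are
  HT-satisfied by all pairs, the deletions of steps 2 and 3 are harmless since X \<subseteq> Y, and a
  non-minimal rule is entailed by a minimal rule subsuming it, which exists because rules are
  finite. The normal form conditions (i) and (ii) follow from non-tautology together with
  steps 2 and 3, and (iii) holds because a rule minimal in a program stays minimal in every
  subprogram.\<close>

definition ht_sat_rule :: "'a set \<Rightarrow> 'a set \<Rightarrow> 'a rule \<Rightarrow> bool" where
  "ht_sat_rule X Y r \<longleftrightarrow> csat_rule Y r \<and>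
     (bneg r \<inter> Y = {} \<and> bnn r \<subseteq> Y \<longrightarrow> bpos r \<subseteq> X \<longrightarrow> hd r \<inter> X \<noteq> {})"

definition simplify_rule :: "'a rule \<Rightarrow> 'a rule" where
  "simplify_rule r = r\<lparr>bnn := bnn r - bpos r, hd := hd r - bneg r\<rparr>"

definition minimal_rules :: "'a rule set \<Rightarrow> 'a rule set" where
  "minimal_rules P = {r \<in> P. minimal_in r P}"

lemma NF_eq_minimal_rules_simplify:
  "NF P = minimal_rules (simplify_rule ` {r \<in> P. \<not> tautological r})"
  unfolding NF_def Let_def minimal_rules_def simplify_rule_def image_image by simp

lemma csat_reduct_iff:
  "csat X (reduct P Y) \<longleftrightarrow>
     (\<forall>r\<in>P. bneg r \<inter> Y = {} \<and> bnn r \<subseteq> Y \<longrightarrow> bpos r \<subseteq> X \<longrightarrow> hd r \<inter> X \<noteq> {})"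
  unfolding csat_def reduct_def csat_rule_def by fastforce

lemma ht_model_iff_ht_sat_rule:
  "ht_model X Y P \<longleftrightarrow> X \<subseteq> Y \<and> (\<forall>r\<in>P. ht_sat_rule X Y r)"
  unfolding ht_model_def ht_sat_rule_def csat_reduct_iff by (auto simp: csat_def)

lemma ht_model_Un:
  "ht_model X Y (P \<union> Q) \<longleftrightarrow> ht_model X Y P \<and> ht_model X Y Q"
  unfolding ht_model_iff_ht_sat_rule by auto

lemma strongly_equiv_if_same_ht_models:
  assumes "\<And>X Y. ht_model X Y P \<longleftrightarrow> ht_model X Y Q"
  shows "strongly_equiv P Q"
  unfolding strongly_equiv_def AS_def answer_set_def by (simp add: ht_model_Un assms)

lemma ht_model_remove_tautological:
  "ht_model X Y {r \<in> P. \<not> tautological r} \<longleftrightarrow> ht_model X Y P"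
  unfolding ht_model_iff_ht_sat_rule ht_sat_rule_def tautological_def csat_rule_def by blast

lemma ht_sat_simplify_rule:
  "X \<subseteq> Y \<Longrightarrow> ht_sat_rule X Y (simplify_rule r) \<longleftrightarrow> ht_sat_rule X Y r"
  unfolding ht_sat_rule_def simplify_rule_def csat_rule_def by auto

lemma ht_model_simplify_rule:
  "ht_model X Y (simplify_rule ` P) \<longleftrightarrow> ht_model X Y P"
  unfolding ht_model_iff_ht_sat_rule by (auto simp: ht_sat_simplify_rule)

lemma subset_body_iff:
  "body s \<subseteq> body r \<longleftrightarrow> bpos s \<subseteq> bpos r \<and> bneg s \<subseteq> bneg r \<and> bnn s \<subseteq> bnn r"
  unfolding body_def by auto

lemma ht_sat_rule_subsumed:
  assumes "hd s \<subseteq> hd r" "body s \<subseteq> body r" "ht_sat_rule X Y s"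
  shows "ht_sat_rule X Y r"
  using assms unfolding subset_body_iff ht_sat_rule_def csat_rule_def by blast

lemma finite_body: "is_rule r \<Longrightarrow> finite (body r)"
  unfolding is_rule_def body_def by auto

lemma exists_minimal_rule_subsuming:
  assumes rules: "\<forall>s\<in>P. is_rule s" and "r \<in> P"
  shows "\<exists>s\<in>minimal_rules P. hd s \<subseteq> hd r \<and> body s \<subseteq> body r"
  using \<open>r \<in> P\<close>
proof (induction "card (hd r) + card (body r)" arbitrary: r rule: less_induct)
  case less
  show ?case
  proof (cases "minimal_in r P")
    case True
    with less.prems show ?thesis unfolding minimal_rules_def by blast
  next
    case False
    then obtain t where "t \<in> P" and t_below:
      "(hd t \<subseteq> hd r \<and> body t \<subset> body r) \<or> (hd t \<subset> hd r \<and> body t \<subseteq> body r)"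
      unfolding minimal_in_def by blast
    have "finite (hd r)" "finite (body r)"
      using rules less.prems finite_body unfolding is_rule_def by auto
    then have "card (hd t) + card (body t) < card (hd r) + card (body r)"
      using t_below by (meson add_le_less_mono add_less_le_mono card_mono psubset_card_mono)
    with less.hyps \<open>t \<in> P\<close> obtain s
      where "s \<in> minimal_rules P" "hd s \<subseteq> hd t" "body s \<subseteq> body t"
      by blast
    with t_below show ?thesis by blast
  qed
qed

lemma ht_model_minimal_rules:
  assumes "\<forall>r\<in>P. is_rule r"
  shows "ht_model X Y (minimal_rules P) \<longleftrightarrow> ht_model X Y P"
  unfolding ht_model_iff_ht_sat_rule
  using exists_minimal_rule_subsuming[OF assms] ht_sat_rule_subsumed
  by (fastforce simp: minimal_rules_def)

lemma is_rule_simplify_rule: "is_rule r \<Longrightarrow> is_rule (simplify_rule r)"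
  unfolding is_rule_def simplify_rule_def by simp

lemma ht_model_NF:
  assumes "is_program P"
  shows "ht_model X Y (NF P) \<longleftrightarrow> ht_model X Y P"
proof -
  have "\<forall>r\<in>simplify_rule ` {r \<in> P. \<not> tautological r}. is_rule r"
    using assms is_rule_simplify_rule unfolding is_program_def by auto
  then show ?thesis
    unfolding NF_eq_minimal_rules_simplify
    by (simp add: ht_model_minimal_rules ht_model_simplify_rule ht_model_remove_tautological)
qed

lemma body_simplify_rule:
  "body (simplify_rule r) = Pos ` bpos r \<union> Neg ` bneg r \<union> NNeg ` (bnn r - bpos r)"
  unfolding body_def simplify_rule_def by simp

lemma card_lits_body_simplify_rule:
  assumes "\<not> tautological r"
  shows "card ({Pos a, Neg a, NNeg a} \<inter> body (simplify_rule r)) \<le> 1"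
proof -
  have "bpos r \<inter> bneg r = {}" "bneg r \<inter> bnn r = {}"
    using assms unfolding tautological_def by auto
  then have "{Pos a, Neg a, NNeg a} \<inter> body (simplify_rule r)
      \<subseteq> {if a \<in> bpos r then Pos a else if a \<in> bneg r then Neg a else NNeg a}"
    unfolding body_simplify_rule by auto
  then obtain l where "{Pos a, Neg a, NNeg a} \<inter> body (simplify_rule r) \<subseteq> {l}"
    by blast
  then have "card ({Pos a, Neg a, NNeg a} \<inter> body (simplify_rule r)) \<le> card {l}"
    by (intro card_mono) auto
  then show ?thesis by simp
qed

lemma head_not_in_body_simplify_rule:
  assumes "\<not> tautological r" "a \<in> hd (simplify_rule r)"
  shows "Pos a \<notin> body (simplify_rule r) \<and> Neg a \<notin> body (simplify_rule r)"
  using assms unfolding tautological_def body_simplify_rule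
  by (auto simp: simplify_rule_def)

lemma minimal_in_minimal_rules: "r \<in> minimal_rules P \<Longrightarrow> minimal_in r (minimal_rules P)"
  unfolding minimal_rules_def minimal_in_def by blast

lemma normal_form_NF: "normal_form (NF P)"
proof -
  have "NF P \<subseteq> simplify_rule ` {r. \<not> tautological r}"
    unfolding NF_eq_minimal_rules_simplify minimal_rules_def by blast
  then have "\<forall>r\<in>NF P. \<forall>a. card ({Pos a, Neg a, NNeg a} \<inter> body r) \<le> 1"
    and "\<forall>r\<in>NF P. \<forall>a\<in>hd r. Pos a \<notin> body r \<and> Neg a \<notin> body r"
    using card_lits_body_simplify_rule head_not_in_body_simplify_rule by fastforce+
  moreover have "\<forall>r\<in>NF P. minimal_in r (NF P)"
    unfolding NF_eq_minimal_rules_simplify by (intro ballI minimal_in_minimal_rules)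
  ultimately show ?thesis
    unfolding normal_form_def by (intro conjI)
qed

theorem proposition1:
  fixes P :: "'a rule set"
  assumes "is_program P"
  shows "normal_form (NF P) \<and> strongly_equiv (NF P) P"
  using ht_model_NF[OF assms] by (intro conjI normal_form_NF strongly_equiv_if_same_ht_models)

end
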